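(* Let $c>0$ and $0<p<1$, and let $(p_n)$ be the symmetric orthonormal polynomials with recursion coefficients $\gamma_n=c(n+1)^p$. Then for every $\omega\in\mathbb{R}$, \[ 0<\lim_{n\to\infty}\frac{\sum_{k=0}^n p_k^2(\omega)}{(n+1)^{1-p}}<\infty, \] and the convergence of the limit is uniform on every compact subset of $\mathbb{R}$.
   Context: Given positive reals $\gamma_n>0$ ($n\ge0$), set $\gamma_{-1}=1$, $p_{-1}(\omega)=0$, $p_0(\omega)=1$, and define polynomials by $\gamma_n p_{n+1}(\omega)=\omega p_n(\omega)-\gamma_{n-1}p_{n-1}(\omega)$ for $n\ge 0$. *)

theory Defs
  imports "HOL-Analysis.Analysis"
begin

text \<open>Pairs (p_n, p_(n+1)) for the three-term recursion
  gamma_n p_(n+1) = w p_n - gamma_(n-1) p_(n-1), with p_(-1) = 0, p_0 = 1, gamma_(-1) = 1.\<close>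
fun opoly_pair :: "(nat \<Rightarrow> real) \<Rightarrow> real \<Rightarrow> nat \<Rightarrow> real \<times> real" where
  "opoly_pair g w 0 = (1, w / g 0)"
| "opoly_pair g w (Suc n) =
     (let (a, b) = opoly_pair g w n in (b, (w * b - g n * a) / g (Suc n)))"

definition opoly :: "(nat \<Rightarrow> real) \<Rightarrow> nat \<Rightarrow> real \<Rightarrow> real" where
  "opoly g n w = fst (opoly_pair g w n)"

lemma opoly_0: "opoly g 0 w = 1"
  by (simp add: opoly_def)

lemma opoly_1: "opoly g 1 w = w / g 0"
  by (simp add: opoly_def split_def)

lemma opoly_rec: "g (Suc n) * opoly g (Suc (Suc n)) w = w * opoly g (Suc n) w - g n * opoly g n w"
  if "g (Suc n) > 0"
  using that by (simp add: opoly_def Let_def split_def)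

end

theory Submission
  imports Defs "HOL-Real_Asymp.Real_Asymp"
begin

(* For |w| <= g n the energy
     E n = g n * (p n ^ 2 + p (n+1) ^ 2) - w * p n * p (n+1)
   is comparable to g n * (p n ^ 2 + p (n+1) ^ 2). The recursion gives
   E (n+1) - E n = (1 - g n / g (n+1)) * X n with X n = O(E n), so one step changes E by O(E n / n).
   The first-order terms cancel over two steps: X n + X (n+1) = O((1/n^2 + 1/g n) * E (n+1)), so
   E n + E (n+1) changes only by the summable relative amount O(1/n^2 + 1/(n g n)) and converges to a
   positive limit, uniformly for w in a compact set. Hence E n and g n * (p n ^ 2 + p (n+1) ^ 2) tend
   to a positive F w, and averaging with the weights 1 / g k gives
     sum_{k<=n} p k ^ 2 ~ F w / 2 * sum_{k<=n} 1 / g k ~ F w * (n+1) powr (1-p) / (2 c (1-p)). *)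

lemma uniform_limit_of_tendsto:
  assumes "(f \<longlongrightarrow> l) F"
  shows "uniform_limit S (\<lambda>n x. f n) (\<lambda>x. l) F"
proof (rule uniform_limitI)
  fix e :: real assume "0 < e"
  from tendstoD[OF assms this] show "\<forall>\<^sub>F n in F. \<forall>x\<in>S. dist (f n) l < e"
    by (rule eventually_mono) blast
qed

lemma uniform_limit_by_comparison:
  fixes f :: "'i \<Rightarrow> 'a \<Rightarrow> real"
  assumes "\<forall>\<^sub>F n in F. \<forall>x\<in>S. \<bar>f n x - l x\<bar> \<le> b n x"
    and "uniform_limit S b (\<lambda>_. 0) F"
  shows "uniform_limit S f l F"
proof -
  have "uniform_limit S (\<lambda>n x. f n x - l x) (\<lambda>_. 0) F"
    by (rule uniform_limit_null_comparison[OF _ assms(2)]) (use assms(1) in simp)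
  from uniform_limit_add[OF this uniform_limit_const[where c = l]] show ?thesis by simp
qed

lemma uniform_limit_eventually_le:
  fixes f :: "'i \<Rightarrow> 'a \<Rightarrow> real"
  assumes "uniform_limit S f l F" and "\<And>x. x \<in> S \<Longrightarrow> l x \<le> B"
  shows "\<forall>\<^sub>F n in F. \<forall>x\<in>S. f n x \<le> B + 1"
  using uniform_limitD[OF assms(1) zero_less_one]
proof (rule eventually_mono, intro ballI)
  fix n x assume "\<forall>x\<in>S. dist (f n x) (l x) < 1" and x: "x \<in> S"
  then show "f n x \<le> B + 1"
    using assms(2)[OF x] by (auto simp: dist_real_def abs_less_iff)
qed

lemma lim_eq_uniform_limit:
  assumes "uniform_limit S f l sequentially" and "x \<in> S"
  shows "lim (\<lambda>n. f n x) = l x"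
  using tendsto_uniform_limitI[OF assms] by (rule limI)

lemma ex_positive_limit_uniform_on_compacts:
  fixes f :: "nat \<Rightarrow> 'a::topological_space \<Rightarrow> real"
  assumes "\<And>K. compact K \<Longrightarrow> \<exists>F. (\<forall>x\<in>K. 0 < F x) \<and> uniform_limit K f F sequentially"
  shows "\<exists>L. (\<forall>x. 0 < L x \<and> (\<lambda>n. f n x) \<longlonglongrightarrow> L x)
    \<and> (\<forall>K. compact K \<longrightarrow> uniform_limit K f L sequentially)"
proof -
  define L where "L x = lim (\<lambda>n. f n x)" for x
  have on_compact: "(\<forall>x\<in>K. 0 < L x) \<and> uniform_limit K f L sequentially" if K: "compact K" for K
  proof -
    obtain F where F: "\<forall>x\<in>K. 0 < F x" and lim: "uniform_limit K f F sequentially"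
      using assms[OF K] by blast
    have "L x = F x" if "x \<in> K" for x
      unfolding L_def using lim that by (rule lim_eq_uniform_limit)
    with F lim show ?thesis by (auto cong: uniform_limit_cong')
  qed
  have "0 < L x \<and> (\<lambda>n. f n x) \<longlonglongrightarrow> L x" for x
    using on_compact[OF compact_sing[of x]] by simp
  with on_compact show ?thesis by blast
qed

lemma compact_continuous_abs_bound:
  fixes f :: "'a::topological_space \<Rightarrow> real"
  assumes "compact K" and "continuous_on K f"
  obtains B where "\<And>x. x \<in> K \<Longrightarrow> \<bar>f x\<bar> \<le> B"
  using compact_imp_bounded[OF compact_continuous_image[OF assms(2,1)]]
  unfolding bounded_real by blast

lemma abs_weighted_sum_le:
  fixes h v C :: "nat \<Rightarrow> real"
  assumes h: "\<And>k. 0 < h k"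
    and early: "\<And>k. k < M \<Longrightarrow> \<bar>v k\<bar> \<le> C k" and late: "\<And>k. M \<le> k \<Longrightarrow> \<bar>v k\<bar> \<le> e"
  shows "\<bar>\<Sum>k\<le>n. h k * v k\<bar> \<le> (\<Sum>k<M. h k * \<bar>C k\<bar>) + e * (\<Sum>k\<le>n. h k)"
proof -
  have "0 \<le> e" using late[of M] by linarith
  have termwise: "\<bar>h k * v k\<bar> \<le> (if k < M then h k * \<bar>C k\<bar> else 0) + e * h k" for k
  proof -
    have "\<bar>v k\<bar> \<le> (if k < M then \<bar>C k\<bar> else 0) + e"
      using early[of k] late[of k] \<open>0 \<le> e\<close> by (cases "k < M") auto
    from mult_left_mono[OF this less_imp_le[OF h[of k]]] show ?thesis
      using h[of k] by (cases "k < M") (simp_all add: abs_mult algebra_simps)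
  qed
  have early_part: "(\<Sum>k\<le>n. if k < M then h k * \<bar>C k\<bar> else 0) \<le> (\<Sum>k<M. h k * \<bar>C k\<bar>)"
  proof -
    have "(\<Sum>k\<le>n. if k < M then h k * \<bar>C k\<bar> else 0) = (\<Sum>k\<in>{..n} \<inter> {..<M}. h k * \<bar>C k\<bar>)"
      by (simp add: sum.inter_restrict lessThan_def)
    also have "\<dots> \<le> (\<Sum>k<M. h k * \<bar>C k\<bar>)"
      by (intro sum_mono2) (auto intro: mult_nonneg_nonneg[OF less_imp_le[OF h]])
    finally show ?thesis .
  qed
  have "\<bar>\<Sum>k\<le>n. h k * v k\<bar> \<le> (\<Sum>k\<le>n. \<bar>h k * v k\<bar>)" by (rule sum_abs)
  also have "\<dots> \<le> (\<Sum>k\<le>n. (if k < M then h k * \<bar>C k\<bar> else 0) + e * h k)"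
    by (intro sum_mono termwise)
  also have "\<dots> = (\<Sum>k\<le>n. if k < M then h k * \<bar>C k\<bar> else 0) + e * (\<Sum>k\<le>n. h k)"
    by (simp add: sum.distrib sum_distrib_left)
  finally show ?thesis using early_part by linarith
qed

lemma uniform_limit_weighted_mean:
  fixes h :: "nat \<Rightarrow> real" and u :: "nat \<Rightarrow> 'a \<Rightarrow> real"
  assumes h: "\<And>k. 0 < h k"
    and H: "filterlim (\<lambda>n. \<Sum>k\<le>n. h k) at_top sequentially"
    and u: "uniform_limit S u l sequentially"
    and bounded: "\<And>k. \<exists>C. \<forall>x\<in>S. \<bar>u k x - l x\<bar> \<le> C"
  shows "uniform_limit S (\<lambda>n x. (\<Sum>k\<le>n. h k * u k x) / (\<Sum>k\<le>n. h k)) l sequentially"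
proof (rule uniform_limitI)
  fix e :: real assume e: "e > 0"
  obtain M where M: "\<And>k x. M \<le> k \<Longrightarrow> x \<in> S \<Longrightarrow> \<bar>u k x - l x\<bar> \<le> e / 2"
    using uniform_limitD[OF u, of "e / 2"] e
    by (fastforce simp: eventually_sequentially dist_real_def)
  obtain C where C: "\<And>k x. x \<in> S \<Longrightarrow> \<bar>u k x - l x\<bar> \<le> C k"
    using bounded by metis
  define C0 where "C0 = (\<Sum>k<M. h k * \<bar>C k\<bar>)"
  have "0 \<le> C0" unfolding C0_def using h by (intro sum_nonneg) (simp add: less_imp_le)
  have "\<forall>\<^sub>F n in sequentially. 2 * C0 / e + 1 \<le> (\<Sum>k\<le>n. h k)"
    using H by (simp add: filterlim_at_top)
  then show "\<forall>\<^sub>F n in sequentially. \<forall>x\<in>S.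
      dist ((\<Sum>k\<le>n. h k * u k x) / (\<Sum>k\<le>n. h k)) (l x) < e"
  proof (rule eventually_mono, intro ballI)
    fix n x assume n: "2 * C0 / e + 1 \<le> (\<Sum>k\<le>n. h k)" and x: "x \<in> S"
    define Hn where "Hn = (\<Sum>k\<le>n. h k)"
    have "0 \<le> 2 * C0 / e" "2 * C0 / e < Hn"
      using \<open>0 \<le> C0\<close> e n by (simp_all add: Hn_def)
    then have Hn: "0 < Hn" "2 * C0 < e * Hn"
      using e by (linarith, simp add: pos_divide_less_eq mult.commute)
    have "\<bar>(\<Sum>k\<le>n. h k * u k x) / Hn - l x\<bar> = \<bar>\<Sum>k\<le>n. h k * (u k x - l x)\<bar> / Hn"
      using Hn by (simp add: Hn_def field_simps sum_distrib_left sum_subtractf)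
    also have "\<dots> \<le> (C0 + e / 2 * Hn) / Hn"
      unfolding C0_def Hn_def using C[OF x] M[OF _ x] h less_imp_le[OF Hn(1)]
      by (intro divide_right_mono abs_weighted_sum_le) (auto simp: Hn_def)
    also have "\<dots> < e"
      using Hn by (simp add: field_simps)
    finally show "dist ((\<Sum>k\<le>n. h k * u k x) / (\<Sum>k\<le>n. h k)) (l x) < e"
      by (simp add: dist_real_def Hn_def)
  qed
qed

lemma filterlim_at_top_of_ratio:
  fixes a D :: "'a \<Rightarrow> real"
  assumes "((\<lambda>n. a n / D n) \<longlongrightarrow> \<kappa>) F" and "0 < \<kappa>" and "filterlim D at_top F"
  shows "filterlim a at_top F"
proof -
  have "filterlim (\<lambda>n. a n / D n * D n) at_top F"
    by (rule filterlim_tendsto_pos_mult_at_top[OF assms])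
  moreover have "\<forall>\<^sub>F n in F. a n / D n * D n = a n"
  proof -
    have "\<forall>\<^sub>F n in F. 0 < D n" using assms(3) by (simp add: filterlim_at_top_dense)
    then show ?thesis by (rule eventually_mono) simp
  qed
  ultimately show ?thesis by (simp add: filterlim_cong)
qed

section \<open>Sequences with small relative increments\<close>

lemma convergent_of_dominated_increments:
  fixes x b :: "nat \<Rightarrow> real"
  assumes dom: "\<And>k. \<bar>x (Suc k) - x k\<bar> \<le> b k" and b: "summable b"
  obtains L where "x \<longlonglongrightarrow> L" and "\<And>n. \<bar>L - x n\<bar> \<le> (\<Sum>k. b (k + n))"
proof -
  define d where "d k = x (Suc k) - x k" for k
  have d: "summable d"
    by (rule summable_comparison_test'[OF b]) (use dom in \<open>auto simp: d_def\<close>)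
  have telescope: "x n = x 0 + (\<Sum>k<n. d k)" for n
    unfolding d_def by (simp add: sum_lessThan_telescope)
  have "(\<lambda>n. x 0 + (\<Sum>k<n. d k)) \<longlonglongrightarrow> x 0 + suminf d"
    by (intro tendsto_add tendsto_const summable_LIMSEQ d)
  then have lim: "x \<longlonglongrightarrow> x 0 + suminf d"
    by (rule Lim_transform_eventually) (simp add: telescope[symmetric])
  have "\<bar>x 0 + suminf d - x n\<bar> \<le> (\<Sum>k. b (k + n))" for n
  proof -
    have b_n: "summable (\<lambda>k. b (k + n))" by (rule summable_ignore_initial_segment[OF b])
    have abs_d_n: "summable (\<lambda>k. \<bar>d (k + n)\<bar>)"
      by (rule summable_comparison_test'[OF b_n]) (use dom in \<open>auto simp: d_def\<close>)
    have "x 0 + suminf d - x n = (\<Sum>k. d (k + n))"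
      using suminf_split_initial_segment[OF d, of n] telescope[of n] by linarith
    also have "\<bar>\<dots>\<bar> \<le> (\<Sum>k. \<bar>d (k + n)\<bar>)" by (rule summable_rabs[OF abs_d_n])
    also have "\<dots> \<le> (\<Sum>k. b (k + n))"
      by (intro suminf_le abs_d_n b_n) (use dom in \<open>simp add: d_def\<close>)
    finally show ?thesis .
  qed
  with lim show ?thesis by (rule that)
qed

lemma exp_minus_two_le:
  fixes t :: real
  assumes "0 \<le> t" "t \<le> 1/2"
  shows "exp (-2 * t) \<le> 1 - t"
proof -
  have "1 + 2 * t \<le> exp (2 * t)" using exp_ge_add_one_self[of "2 * t"] by simp
  then have "exp (-2 * t) \<le> 1 / (1 + 2 * t)"
    using assms by (simp add: exp_minus field_simps)
  also have "1 / (1 + 2 * t) \<le> 1 - t"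
    using assms by (simp add: field_simps) (metis mult_left_mono mult.right_neutral)
  finally show ?thesis .
qed

lemma relative_increments_bounds:
  fixes x eps :: "nat \<Rightarrow> real"
  assumes eps: "\<And>n. 0 \<le> eps n" "\<And>n. eps n \<le> 1/2"
    and step: "\<And>n. \<bar>x (Suc n) - x n\<bar> \<le> eps n * x n"
    and pos: "0 < x 0"
  shows "x 0 * exp (-2 * (\<Sum>k<n. eps k)) \<le> x n \<and> x n \<le> x 0 * exp (\<Sum>k<n. eps k)"
proof (induction n)
  case 0
  then show ?case by simp
next
  case (Suc n)
  have "0 < x 0 * exp (-2 * (\<Sum>k<n. eps k))" using pos by simp
  then have xn: "0 < x n" using Suc.IH by linarith
  have lower: "(1 - eps n) * x n \<le> x (Suc n)" and upper: "x (Suc n) \<le> (1 + eps n) * x n"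
    using step[of n] by (auto simp: abs_le_iff algebra_simps)
  have "x 0 * exp (-2 * (\<Sum>k<Suc n. eps k)) = exp (-2 * eps n) * (x 0 * exp (-2 * (\<Sum>k<n. eps k)))"
    by (simp add: algebra_simps exp_add[symmetric])
  also have "\<dots> \<le> (1 - eps n) * x n"
    using Suc.IH exp_minus_two_le[OF eps(1,2)] eps(2)[of n] \<open>0 < x 0 * exp (-2 * (\<Sum>k<n. eps k))\<close>
    by (intro mult_mono) auto
  finally have "x 0 * exp (-2 * (\<Sum>k<Suc n. eps k)) \<le> x (Suc n)" using lower by linarith
  moreover have "(1 + eps n) * x n \<le> exp (eps n) * (x 0 * exp (\<Sum>k<n. eps k))"
    using Suc.IH xn exp_ge_add_one_self[of "eps n"] by (intro mult_mono) auto
  then have "x (Suc n) \<le> x 0 * exp (\<Sum>k<Suc n. eps k)"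
    using upper by (simp add: algebra_simps exp_add)
  ultimately show ?case ..
qed

lemma relative_increments_convergent:
  fixes x eps :: "nat \<Rightarrow> real"
  assumes eps: "\<And>n. 0 \<le> eps n" "\<And>n. eps n \<le> 1/2" "summable eps"
    and step: "\<And>n. \<bar>x (Suc n) - x n\<bar> \<le> eps n * x n"
    and pos: "0 < x 0"
  obtains L where "x \<longlonglongrightarrow> L" "x 0 * exp (-2 * suminf eps) \<le> L"
    and "\<And>n. x n \<le> x 0 * exp (suminf eps)"
    and "\<And>n. \<bar>L - x n\<bar> \<le> x 0 * exp (suminf eps) * (\<Sum>k. eps (k + n))"
proof -
  define B where "B = x 0 * exp (suminf eps)"
  have partial: "(\<Sum>k<n. eps k) \<le> suminf eps" for n
    using eps by (intro sum_le_suminf) auto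
  have lower: "x 0 * exp (-2 * suminf eps) \<le> x n" for n
  proof -
    have "x 0 * exp (-2 * suminf eps) \<le> x 0 * exp (-2 * (\<Sum>k<n. eps k))"
      using partial[of n] pos by (intro mult_left_mono) auto
    then show ?thesis using relative_increments_bounds[OF eps(1,2) step pos, of n] by linarith
  qed
  have upper: "x n \<le> B" for n
  proof -
    have "x 0 * exp (\<Sum>k<n. eps k) \<le> B"
      unfolding B_def using partial[of n] pos by (intro mult_left_mono) auto
    then show ?thesis using relative_increments_bounds[OF eps(1,2) step pos, of n] by linarith
  qed
  have dom: "\<bar>x (Suc k) - x k\<bar> \<le> B * eps k" for k
  proof -
    have "eps k * x k \<le> B * eps k"
      using mult_left_mono[OF upper[of k] eps(1)[of k]] by (simp add: mult.commute)
    then show ?thesis using step[of k] by linarith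
  qed
  obtain L where lim: "x \<longlonglongrightarrow> L" and tail: "\<And>n. \<bar>L - x n\<bar> \<le> (\<Sum>k. B * eps (k + n))"
    using convergent_of_dominated_increments[OF dom summable_mult[OF eps(3)]] by blast
  have "(\<Sum>k. B * eps (k + n)) = B * (\<Sum>k. eps (k + n))" for n
    by (rule suminf_mult[OF summable_ignore_initial_segment[OF eps(3)]])
  moreover have "x 0 * exp (-2 * suminf eps) \<le> L"
    by (rule LIMSEQ_le_const[OF lim]) (use lower in blast)
  ultimately show ?thesis
    using that[OF lim] upper tail unfolding B_def by simp
qed

lemma relative_increments_convergent_from:
  fixes x eps :: "nat \<Rightarrow> real"
  assumes eps: "\<And>n. 0 \<le> eps n" "summable eps" "\<And>n. N \<le> n \<Longrightarrow> eps n \<le> 1/2"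
    and step: "\<And>n. N \<le> n \<Longrightarrow> \<bar>x (Suc n) - x n\<bar> \<le> eps n * x n"
    and pos: "0 < x N"
  obtains L where "x \<longlonglongrightarrow> L" "0 < L" "L \<le> x N * exp (suminf eps)"
    and "\<And>n. N \<le> n \<Longrightarrow> \<bar>L - x n\<bar> \<le> x N * exp (suminf eps) * (\<Sum>k. eps (k + n))"
proof -
  define M where "M = x N * exp (\<Sum>k. eps (k + N))"
  obtain L where L: "(\<lambda>n. x (n + N)) \<longlonglongrightarrow> L"
    "x N * exp (-2 * (\<Sum>k. eps (k + N))) \<le> L"
    "\<And>n. x (n + N) \<le> M" "\<And>n. \<bar>L - x (n + N)\<bar> \<le> M * (\<Sum>k. eps (k + n + N))"
    unfolding M_def
    by (rule relative_increments_convergent[of "\<lambda>n. eps (n + N)" "\<lambda>n. x (n + N)"])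
      (use eps step pos summable_ignore_initial_segment in \<open>auto simp: add.assoc\<close>)
  have "(\<Sum>k. eps (k + N)) \<le> suminf eps"
    using suminf_split_initial_segment[OF eps(2), of N] sum_nonneg[of "{..<N}" eps] eps(1)
    by simp
  then have "M \<le> x N * exp (suminf eps)"
    unfolding M_def using pos by (intro mult_left_mono) auto
  show ?thesis
  proof (rule that)
    show "x \<longlonglongrightarrow> L" using L(1) by (rule LIMSEQ_offset)
    show "0 < L" using L(2) pos by (smt (verit) exp_gt_zero mult_pos_pos)
    show "L \<le> x N * exp (suminf eps)"
      using LIMSEQ_le_const2[OF L(1)] L(3) \<open>M \<le> x N * exp (suminf eps)\<close> by fastforce
    fix n assume "N \<le> n"
    then have "\<bar>L - x n\<bar> \<le> M * (\<Sum>k. eps (k + n))"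
      using L(4)[of "n - N"] by (simp add: add.assoc)
    also have "\<dots> \<le> x N * exp (suminf eps) * (\<Sum>k. eps (k + n))"
      using \<open>M \<le> x N * exp (suminf eps)\<close> eps(1)
      by (intro mult_right_mono suminf_nonneg summable_ignore_initial_segment eps(2)) auto
    finally show "\<bar>L - x n\<bar> \<le> x N * exp (suminf eps) * (\<Sum>k. eps (k + n))" .
  qed
qed

lemma uniform_limit_relative_increments:
  fixes x :: "nat \<Rightarrow> 'a \<Rightarrow> real" and eps :: "nat \<Rightarrow> real"
  assumes eps: "\<And>n. 0 \<le> eps n" "summable eps" "\<And>n. N \<le> n \<Longrightarrow> eps n \<le> 1/2"
    and step: "\<And>n w. w \<in> S \<Longrightarrow> N \<le> n \<Longrightarrow> \<bar>x (Suc n) w - x n w\<bar> \<le> eps n * x n w"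
    and pos: "\<And>w. w \<in> S \<Longrightarrow> 0 < x N w"
    and bound: "\<And>w. w \<in> S \<Longrightarrow> x N w \<le> B"
  obtains L where "\<And>w. w \<in> S \<Longrightarrow> 0 < L w \<and> L w \<le> B * exp (suminf eps)"
    and "uniform_limit S x L sequentially"
proof -
  define M where "M = B * exp (suminf eps)"
  define L where "L w = lim (\<lambda>n. x n w)" for w
  have L: "(\<lambda>n. x n w) \<longlonglongrightarrow> L w \<and> 0 < L w \<and> L w \<le> M
      \<and> (\<forall>n\<ge>N. \<bar>x n w - L w\<bar> \<le> M * (\<Sum>k. eps (k + n)))" if w: "w \<in> S" for w
  proof -
    obtain L' where L': "(\<lambda>n. x n w) \<longlonglongrightarrow> L'" "0 < L'" "L' \<le> x N w * exp (suminf eps)"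
      "\<And>n. N \<le> n \<Longrightarrow> \<bar>L' - x n w\<bar> \<le> x N w * exp (suminf eps) * (\<Sum>k. eps (k + n))"
      by (rule relative_increments_convergent_from[of eps N "\<lambda>n. x n w"])
        (use eps step w pos in auto)
    have "x N w * exp (suminf eps) \<le> M"
      unfolding M_def using bound[OF w] by simp
    moreover have "0 \<le> (\<Sum>k. eps (k + n))" for n
      by (intro suminf_nonneg summable_ignore_initial_segment eps)
    ultimately have "\<forall>n\<ge>N. \<bar>x n w - L' \<bar> \<le> M * (\<Sum>k. eps (k + n))"
      using L'(4) by (metis abs_minus_commute mult_right_mono order_trans)
    moreover have "L w = L'" unfolding L_def using L'(1) by (rule limI)
    ultimately show ?thesis using L' \<open>x N w * exp (suminf eps) \<le> M\<close> by auto
  qed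
  have "uniform_limit S x L sequentially"
  proof (rule uniform_limit_by_comparison)
    show "\<forall>\<^sub>F n in sequentially. \<forall>w\<in>S. \<bar>x n w - L w\<bar> \<le> M * (\<Sum>k. eps (k + n))"
      using L unfolding eventually_sequentially by blast
    have "(\<lambda>n. M * (\<Sum>k. eps (k + n))) \<longlonglongrightarrow> 0"
      by (intro tendsto_mult_right_zero suminf_exist_split2 eps(2))
    then show "uniform_limit S (\<lambda>n w. M * (\<Sum>k. eps (k + n))) (\<lambda>_. 0) sequentially"
      by (rule uniform_limit_of_tendsto)
  qed
  with L show ?thesis using that unfolding M_def by blast
qed

lemma powr_diff_le:
  fixes a b p :: real
  assumes "0 < a" "a \<le> b" "0 \<le> p" "p \<le> 1"
  shows "b powr p - a powr p \<le> (b - a) / a * a powr p"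
proof -
  have "(b / a) powr p \<le> (b / a) powr 1"
    using assms by (intro powr_mono) auto
  then have ratio: "(b / a) powr p \<le> b / a" using assms by simp
  have "b powr p - a powr p = a powr p * ((b / a) powr p - 1)"
    using assms by (simp add: powr_divide algebra_simps)
  also have "\<dots> \<le> a powr p * (b / a - 1)"
    using ratio by (intro mult_left_mono) auto
  also have "\<dots> = (b - a) / a * a powr p" using assms by (simp add: field_simps)
  finally show ?thesis .
qed

lemma powr_ratio_defect_le:
  fixes p :: real
  assumes "p \<le> 1"
  shows "1 - ((real n + 1) / (real n + 2)) powr p \<le> 1 / (real n + 2)"
proof -
  define a where "a = (real n + 1) / (real n + 2)"
  have "a powr 1 \<le> a powr p" using assms by (intro powr_mono') (auto simp: a_def)
  moreover have "1 - a = 1 / (real n + 2)" by (simp add: a_def field_simps)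
  ultimately show ?thesis by (simp add: a_def)
qed

lemma powr_ratio_defect_diff_le:
  fixes p :: real
  assumes p: "0 \<le> p" "p \<le> 1"
  shows "\<bar>((real n + 2) / (real n + 3)) powr p - ((real n + 1) / (real n + 2)) powr p\<bar>
    \<le> 1 / (real n + 1)\<^sup>2"
proof -
  define a where "a = (real n + 1) / (real n + 2)"
  define b where "b = (real n + 2) / (real n + 3)"
  have ab: "0 < a" "a \<le> b" by (auto simp: a_def b_def field_simps)
  have "a powr p \<le> b powr p" using ab p by (intro powr_mono2) auto
  moreover have "b powr p - a powr p \<le> (b - a) / a * a powr p"
    using ab p by (intro powr_diff_le) auto
  moreover have "(b - a) / a * a powr p \<le> (b - a) / a"
    using ab p powr_le1[of p a] by (intro mult_left_le) (auto simp: a_def)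
  moreover have "(b - a) / a = 1 / ((real n + 1) * (real n + 3))"
    unfolding a_def b_def by (simp add: divide_simps) (simp add: algebra_simps)
  moreover have "1 / ((real n + 1) * (real n + 3)) \<le> 1 / (real n + 1)\<^sup>2"
    by (intro divide_left_mono) (auto simp: power2_eq_square intro!: mult_left_mono)
  ultimately show ?thesis by (simp add: a_def b_def)
qed

lemma powr_ratio_diff_le:
  fixes p :: real
  assumes p: "0 \<le> p" "p \<le> 1"
  shows "\<bar>((real n + 3) / (real n + 2)) powr p - ((real n + 2) / (real n + 1)) powr p\<bar>
    \<le> 1 / (real n + 1)\<^sup>2"
proof -
  define a where "a = (real n + 3) / (real n + 2)"
  define b where "b = (real n + 2) / (real n + 1)"
  have ab: "1 \<le> a" "a \<le> b" by (auto simp: a_def b_def field_simps)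
  have "a powr p \<le> b powr p" using ab p by (intro powr_mono2) auto
  moreover have "b powr p - a powr p \<le> (b - a) / a * a powr p"
    using ab p by (intro powr_diff_le) auto
  moreover have "(b - a) / a * a powr p \<le> (b - a) / a * a"
    using ab p powr_mono[of p 1 a] by (intro mult_left_mono) auto
  moreover have "b - a = 1 / ((real n + 1) * (real n + 2))"
    unfolding a_def b_def by (simp add: divide_simps) (simp add: algebra_simps)
  moreover have "1 / ((real n + 1) * (real n + 2)) \<le> 1 / (real n + 1)\<^sup>2"
    by (intro divide_left_mono) (auto simp: power2_eq_square intro!: mult_left_mono)
  ultimately show ?thesis using ab by (simp add: a_def b_def)
qed

lemma powr_increment_bounds:
  fixes x q :: real
  assumes x: "0 \<le> x" and q: "0 \<le> q" "q \<le> 1"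
  shows "q * (x + 1) powr (q - 1) \<le> (x + 1) powr q - x powr q"
    and "0 < x \<Longrightarrow> (x + 1) powr q - x powr q \<le> q * x powr (q - 1)"
proof -
  have mvt: "\<exists>z. y < z \<and> z < y + 1 \<and> (y + 1) powr q - y powr q = q * z powr (q - 1)"
    if "0 < y" for y :: real
  proof -
    have "\<exists>z. y < z \<and> z < y + 1 \<and>
        (\<lambda>t. t powr q) (y + 1) - (\<lambda>t. t powr q) y = ((y + 1) - y) * (q * z powr (q - 1))"
      by (rule MVT2) (use that in \<open>auto intro!: has_real_derivative_powr\<close>)
    then show ?thesis by simp
  qed
  show "q * (x + 1) powr (q - 1) \<le> (x + 1) powr q - x powr q"
  proof (cases "x = 0")
    case True
    then show ?thesis using q by simp
  next
    case False
    with x have "0 < x" by simp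
    then obtain z where z: "x < z" "z < x + 1" "(x + 1) powr q - x powr q = q * z powr (q - 1)"
      using mvt by blast
    have "(x + 1) powr (q - 1) \<le> z powr (q - 1)" using z x q by (intro powr_mono2') auto
    from mult_left_mono[OF this q(1)] show ?thesis using z by simp
  qed
  assume "0 < x"
  then obtain z where z: "x < z" "z < x + 1" "(x + 1) powr q - x powr q = q * z powr (q - 1)"
    using mvt by blast
  have "z powr (q - 1) \<le> x powr (q - 1)" using z \<open>0 < x\<close> q by (intro powr_mono2') auto
  from mult_left_mono[OF this q(1)]
  show "(x + 1) powr q - x powr q \<le> q * x powr (q - 1)" using z by simp
qed

lemma sum_powr_bounds:
  fixes q :: real
  assumes q: "0 \<le> q" "q \<le> 1"
  shows "(real n + 1) powr q - 1 \<le> q * (\<Sum>k\<le>n. (real k + 1) powr (q - 1))"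
    and "q * (\<Sum>k\<le>n. (real k + 1) powr (q - 1)) \<le> (real n + 1) powr q"
proof -
  have sum_eq: "q * (\<Sum>k\<le>n. (real k + 1) powr (q - 1)) = (\<Sum>k<Suc n. q * real (Suc k) powr (q - 1))"
    by (simp add: lessThan_Suc_atMost sum_distrib_left add.commute)
  have "(\<Sum>k<Suc n. real (Suc (Suc k)) powr q - real (Suc k) powr q)
      \<le> (\<Sum>k<Suc n. q * real (Suc k) powr (q - 1))"
    using powr_increment_bounds(2)[of "real (Suc _)" q] q
    by (intro sum_mono) (simp add: add.commute)
  also have "(\<Sum>k<Suc n. real (Suc (Suc k)) powr q - real (Suc k) powr q)
      = real (Suc (Suc n)) powr q - real (Suc 0) powr q"
    by (rule sum_lessThan_telescope[where f = "\<lambda>k. real (Suc k) powr q"])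
  moreover have "real (Suc n) powr q \<le> real (Suc (Suc n)) powr q"
    using q by (intro powr_mono2) auto
  ultimately show "(real n + 1) powr q - 1 \<le> q * (\<Sum>k\<le>n. (real k + 1) powr (q - 1))"
    unfolding sum_eq by (simp add: add.commute)
  have "(\<Sum>k<Suc n. q * real (Suc k) powr (q - 1)) \<le> (\<Sum>k<Suc n. real (Suc k) powr q - real k powr q)"
    using powr_increment_bounds(1)[of "real _" q] q
    by (intro sum_mono) (simp add: add.commute)
  also have "\<dots> = real (Suc n) powr q - real 0 powr q"
    by (rule sum_lessThan_telescope)
  finally show "q * (\<Sum>k\<le>n. (real k + 1) powr (q - 1)) \<le> (real n + 1) powr q"
    unfolding sum_eq using q by (simp add: add.commute)
qed

lemma sum_powr_asymptotic:
  fixes p :: real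
  assumes p: "0 < p" "p < 1"
  shows "(\<lambda>n. (\<Sum>k\<le>n. (real k + 1) powr (- p)) / (real n + 1) powr (1 - p)) \<longlonglongrightarrow> 1 / (1 - p)"
proof -
  define q where "q = 1 - p"
  have q: "0 < q" "q \<le> 1" using p by (auto simp: q_def)
  define S where "S n = q * (\<Sum>k\<le>n. (real k + 1) powr (q - 1))" for n
  have "(\<lambda>n. S n / (real n + 1) powr q) \<longlonglongrightarrow> 1"
  proof (rule tendsto_sandwich)
    show "\<forall>\<^sub>F n in sequentially. 1 - 1 / (real n + 1) powr q \<le> S n / (real n + 1) powr q"
    proof (intro always_eventually allI)
      fix n
      have "((real n + 1) powr q - 1) / (real n + 1) powr q \<le> S n / (real n + 1) powr q"
        unfolding S_def using sum_powr_bounds(1)[of q n] q by (intro divide_right_mono) auto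
      then show "1 - 1 / (real n + 1) powr q \<le> S n / (real n + 1) powr q"
        by (simp add: diff_divide_distrib)
    qed
    show "\<forall>\<^sub>F n in sequentially. S n / (real n + 1) powr q \<le> 1"
      unfolding S_def using sum_powr_bounds(2)[of q] q by (intro always_eventually allI) simp
    show "(\<lambda>n. 1 - 1 / (real n + 1) powr q) \<longlonglongrightarrow> 1"
      using q by real_asymp
  qed simp
  then have "(\<lambda>n. S n / (real n + 1) powr q / q) \<longlonglongrightarrow> 1 / q"
    using q by (intro tendsto_divide tendsto_const) auto
  then show ?thesis
    using q by (simp add: S_def q_def)
qed

section \<open>The energy of the orthonormal polynomials\<close>

lemma continuous_on_opoly_pair: "continuous_on A (\<lambda>w. opoly_pair g w n)"
proof (induction n)
  case 0
  show ?case by (simp add: divide_inverse) (intro continuous_intros)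
next
  case (Suc n)
  have "opoly_pair g w (Suc n) = (snd (opoly_pair g w n),
      (w * snd (opoly_pair g w n) - g n * fst (opoly_pair g w n)) / g (Suc n))" for w
    by (simp add: Let_def split_def)
  then show ?case
    unfolding divide_inverse by (simp only:) (intro continuous_intros Suc)
qed

lemma continuous_on_opoly: "continuous_on A (\<lambda>w. opoly g n w)"
  unfolding opoly_def by (intro continuous_intros continuous_on_opoly_pair)

lemma abs_mult_le_half_sum_squares: "\<bar>a * b\<bar> \<le> (a\<^sup>2 + b\<^sup>2) / 2" for a b :: real
proof -
  have "0 \<le> (\<bar>a\<bar> - \<bar>b\<bar>)\<^sup>2" by simp
  then show ?thesis by (simp add: power2_eq_square algebra_simps abs_mult)
qed

locale jacobi_coeffs =
  fixes g :: "nat \<Rightarrow> real"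
  assumes pos: "\<And>n. 0 < g n"
    and mono: "\<And>n. g n \<le> g (Suc n)"
    and defect_bound: "\<And>n. 1 - g n / g (Suc n) \<le> 1 / (real n + 2)"
    and defect_diff_bound:
      "\<And>n. \<bar>g (Suc n) / g (Suc (Suc n)) - g n / g (Suc n)\<bar> \<le> 1 / (real n + 1)\<^sup>2"
    and ratio_diff_bound:
      "\<And>n. \<bar>g (Suc (Suc n)) / g (Suc n) - g (Suc n) / g n\<bar> \<le> 1 / (real n + 1)\<^sup>2"
begin

abbreviation P :: "nat \<Rightarrow> real \<Rightarrow> real" where
  "P n w \<equiv> opoly g n w"

(* With constant coefficients the recursion conserves the energy; in general its increments are
   proportional to the defect (energy_Suc_diff). *)
definition energy :: "nat \<Rightarrow> real \<Rightarrow> real" where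
  "energy n w = g n * ((P n w)\<^sup>2 + (P (Suc n) w)\<^sup>2) - w * P n w * P (Suc n) w"

definition drift :: "nat \<Rightarrow> real \<Rightarrow> real" where
  "drift n w = (g (Suc n) + g n) * (P (Suc n) w)\<^sup>2 - energy n w"

definition defect :: "nat \<Rightarrow> real" where
  "defect n = 1 - g n / g (Suc n)"

lemma recurrence: "g (Suc n) * P (Suc (Suc n)) w = w * P (Suc n) w - g n * P n w"
  using pos by (intro opoly_rec) auto

lemma consecutive_not_both_zero: "\<not> (P n w = 0 \<and> P (Suc n) w = 0)"
proof (induction n)
  case 0
  then show ?case by (simp add: opoly_0)
next
  case (Suc n)
  show ?case
  proof
    assume zero: "P (Suc n) w = 0 \<and> P (Suc (Suc n)) w = 0"
    with recurrence[of n w] pos[of n] have "P n w = 0" by simp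
    with Suc zero show False by simp
  qed
qed

lemma consecutive_squares_pos: "0 < (P n w)\<^sup>2 + (P (Suc n) w)\<^sup>2"
  using consecutive_not_both_zero[of n w] by (simp add: sum_power2_gt_zero_iff)

lemma energy_Suc_diff: "energy (Suc n) w - energy n w = defect n * drift n w"
proof -
  have "g (Suc n) * (energy (Suc n) w - energy n w) = (g (Suc n) - g n) * drift n w"
    unfolding energy_def drift_def using recurrence[of n w] by algebra
  then show ?thesis
    using pos[of "Suc n"] by (simp add: defect_def field_simps)
qed

lemma drift_pair_sum:
  "drift n w + drift (Suc n) w
     = (P (Suc (Suc n)) w)\<^sup>2 * (g (Suc (Suc n)) - (g (Suc n))\<^sup>2 / g n)
       + w * P (Suc n) w * P (Suc (Suc n)) w * (g n + g (Suc n)) / g n"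
  (is "?lhs = ?rhs")
proof -
  have scaled: "g n * ?lhs
     = (P (Suc (Suc n)) w)\<^sup>2 * (g n * g (Suc (Suc n)) - (g (Suc n))\<^sup>2)
       + w * P (Suc n) w * P (Suc (Suc n)) w * (g n + g (Suc n))"
    unfolding energy_def drift_def using recurrence[of n w] by algebra
  have "?lhs = (g n * ?lhs) / g n" using pos[of n] by simp
  also have "\<dots> = ?rhs" unfolding scaled using pos[of n] by (simp add: field_simps)
  finally show ?thesis .
qed

lemma defect_nonneg: "0 \<le> defect n"
  using mono[of n] pos[of n] pos[of "Suc n"] by (simp add: defect_def)

lemma defect_le: "defect n \<le> 1 / (real n + 1)"
proof -
  have "1 / (real n + 2) \<le> 1 / (real n + 1)" by (intro divide_left_mono) auto
  then show ?thesis using defect_bound[of n] by (simp add: defect_def)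
qed

lemma Suc_le_double: "g (Suc n) \<le> 2 * g n"
proof -
  have "1 / (real n + 2) \<le> 1 / 2" by auto
  then have "1 / 2 \<le> g n / g (Suc n)" using defect_bound[of n] by linarith
  then show ?thesis using pos[of "Suc n"] by (simp add: field_simps)
qed

lemma energy_approx:
  "\<bar>g n * ((P n w)\<^sup>2 + (P (Suc n) w)\<^sup>2) - energy n w\<bar> \<le> \<bar>w\<bar> * (((P n w)\<^sup>2 + (P (Suc n) w)\<^sup>2) / 2)"
proof -
  have "\<bar>g n * ((P n w)\<^sup>2 + (P (Suc n) w)\<^sup>2) - energy n w\<bar> = \<bar>w\<bar> * \<bar>P n w * P (Suc n) w\<bar>"
    by (simp add: energy_def abs_mult mult.assoc)
  also have "\<dots> \<le> \<bar>w\<bar> * (((P n w)\<^sup>2 + (P (Suc n) w)\<^sup>2) / 2)"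
    by (intro mult_left_mono abs_mult_le_half_sum_squares) auto
  finally show ?thesis .
qed

lemma energy_lower_bound:
  assumes "\<bar>w\<bar> \<le> g n"
  shows "g n / 2 * ((P n w)\<^sup>2 + (P (Suc n) w)\<^sup>2) \<le> energy n w"
proof -
  have "\<bar>w\<bar> * (((P n w)\<^sup>2 + (P (Suc n) w)\<^sup>2) / 2) \<le> g n * (((P n w)\<^sup>2 + (P (Suc n) w)\<^sup>2) / 2)"
    using assms by (intro mult_right_mono) auto
  with energy_approx[of n w]
  have "g n * ((P n w)\<^sup>2 + (P (Suc n) w)\<^sup>2) - energy n w \<le> g n * (((P n w)\<^sup>2 + (P (Suc n) w)\<^sup>2) / 2)"
    by (meson abs_le_D1 order_trans)
  then show ?thesis by (simp add: field_simps)
qed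

lemma energy_pos:
  assumes "\<bar>w\<bar> \<le> g n"
  shows "0 < energy n w"
  using energy_lower_bound[OF assms] pos[of n] consecutive_squares_pos[of n w]
  by (smt (verit) divide_pos_pos mult_pos_pos)

lemma squares_le_energy:
  assumes "\<bar>w\<bar> \<le> g n"
  shows "(P n w)\<^sup>2 + (P (Suc n) w)\<^sup>2 \<le> 2 * energy n w / g n"
  using energy_lower_bound[OF assms] pos[of n] by (simp add: field_simps)

lemma energy_approx_relative:
  assumes "\<bar>w\<bar> \<le> g n"
  shows "\<bar>g n * ((P n w)\<^sup>2 + (P (Suc n) w)\<^sup>2) - energy n w\<bar> \<le> \<bar>w\<bar> * energy n w / g n"
proof -
  have "\<bar>g n * ((P n w)\<^sup>2 + (P (Suc n) w)\<^sup>2) - energy n w\<bar>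
      \<le> \<bar>w\<bar> * (((P n w)\<^sup>2 + (P (Suc n) w)\<^sup>2) / 2)"
    by (rule energy_approx)
  also have "\<dots> \<le> \<bar>w\<bar> * (energy n w / g n)"
    using squares_le_energy[OF assms] by (intro mult_left_mono) (simp_all add: mult.commute)
  finally show ?thesis by simp
qed

lemma drift_bound:
  assumes "\<bar>w\<bar> \<le> g n"
  shows "\<bar>drift n w\<bar> \<le> 5 * energy n w"
proof -
  have "(P (Suc n) w)\<^sup>2 \<le> 2 * energy n w / g n"
    using squares_le_energy[OF assms] by (smt (verit) zero_le_power2)
  then have "(g (Suc n) + g n) * (P (Suc n) w)\<^sup>2 \<le> (3 * g n) * (2 * energy n w / g n)"
    using Suc_le_double[of n] pos[of n] pos[of "Suc n"] by (intro mult_mono) auto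
  then have "(g (Suc n) + g n) * (P (Suc n) w)\<^sup>2 \<le> 6 * energy n w"
    using pos[of n] by simp
  moreover have "0 \<le> (g (Suc n) + g n) * (P (Suc n) w)\<^sup>2"
    using pos[of n] pos[of "Suc n"] by simp
  ultimately show ?thesis
    using energy_pos[OF assms] by (simp add: drift_def abs_le_iff)
qed

lemma drift_pair_sum_bound:
  assumes w: "\<bar>w\<bar> \<le> R" and R: "R \<le> g n"
  shows "\<bar>drift n w + drift (Suc n) w\<bar> \<le> (2 / (real n + 1)\<^sup>2 + 2 * R / g n) * energy (Suc n) w"
proof -
  define g0 g1 g2 a b E1 where "g0 = g n" "g1 = g (Suc n)" "g2 = g (Suc (Suc n))"
    "a = P (Suc n) w" "b = P (Suc (Suc n)) w" "E1 = energy (Suc n) w"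
  note defs = this
  have gpos: "0 < g0" "0 < g1" using pos unfolding defs by auto
  have w1: "\<bar>w\<bar> \<le> g (Suc n)" using w R mono[of n] by linarith
  have E1: "0 < E1" unfolding defs by (rule energy_pos[OF w1])
  have squares: "a\<^sup>2 + b\<^sup>2 \<le> 2 * E1 / g1" unfolding defs by (rule squares_le_energy[OF w1])
  have b2: "b\<^sup>2 \<le> 2 * E1 / g1" using squares by (smt (verit) zero_le_power2)
  have ab: "\<bar>a * b\<bar> \<le> E1 / g1" using abs_mult_le_half_sum_squares[of a b] squares by simp
  have first: "\<bar>b\<^sup>2 * (g2 - g1\<^sup>2 / g0)\<bar> \<le> 2 * E1 / (real n + 1)\<^sup>2"
  proof -
    have "\<bar>g2 - g1\<^sup>2 / g0\<bar> = g1 * \<bar>g2 / g1 - g1 / g0\<bar>"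
      using gpos by (simp add: abs_mult[symmetric] field_simps power2_eq_square)
    also have "\<dots> \<le> g1 * (1 / (real n + 1)\<^sup>2)"
      using ratio_diff_bound[of n] gpos unfolding defs by (intro mult_left_mono) auto
    finally have "b\<^sup>2 * \<bar>g2 - g1\<^sup>2 / g0\<bar> \<le> (2 * E1 / g1) * (g1 * (1 / (real n + 1)\<^sup>2))"
      using b2 gpos E1 by (intro mult_mono) auto
    then show ?thesis using gpos by (simp add: abs_mult)
  qed
  have second: "\<bar>w * a * b * (g0 + g1) / g0\<bar> \<le> 2 * R * E1 / g0"
  proof -
    have "\<bar>w * a * b * (g0 + g1) / g0\<bar> = \<bar>w\<bar> * \<bar>a * b\<bar> * ((g0 + g1) / g0)"
      using gpos by (simp add: abs_mult mult.assoc)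
    also have "\<dots> \<le> R * (E1 / g1) * ((g0 + g1) / g0)"
      using w ab gpos by (intro mult_mono mult_right_mono) auto
    also have "\<dots> = R * E1 * (1 / g1 + 1 / g0)" using gpos by (simp add: field_simps)
    also have "\<dots> \<le> R * E1 * (2 / g0)"
    proof -
      have "1 / g1 \<le> 1 / g0" using gpos mono[of n] unfolding defs by (intro divide_left_mono) auto
      then show ?thesis using w E1 by (intro mult_left_mono) auto
    qed
    finally show ?thesis by (simp add: ac_simps)
  qed
  have "\<bar>drift n w + drift (Suc n) w\<bar> \<le> 2 * E1 / (real n + 1)\<^sup>2 + 2 * R * E1 / g0"
    unfolding drift_pair_sum defs[symmetric]
    by (rule order_trans[OF abs_triangle_ineq add_mono[OF first second]])
  then show ?thesis unfolding defs by (simp add: field_simps)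
qed

(* The drifts of two consecutive steps nearly cancel (drift_pair_sum_bound), so two steps change
   the energy only by a summable relative amount. *)
lemma energy_two_step:
  assumes w: "\<bar>w\<bar> \<le> R" and R: "R \<le> g n"
  shows "\<bar>energy (Suc (Suc n)) w - energy n w\<bar>
    \<le> (7 / (real n + 1)\<^sup>2 + 2 * R / ((real n + 1) * g n)) * energy (Suc n) w"
proof -
  define E1 where "E1 = energy (Suc n) w"
  have w1: "\<bar>w\<bar> \<le> g (Suc n)" using w R mono[of n] by linarith
  have E1: "0 < E1" unfolding E1_def by (rule energy_pos[OF w1])
  define c where "c = 1 / (real n + 1)"
  have c: "0 < c" "c \<le> 1" unfolding c_def by auto
  have "energy (Suc (Suc n)) w - energy n w
      = defect n * (drift n w + drift (Suc n) w) + (defect (Suc n) - defect n) * drift (Suc n) w"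
    using energy_Suc_diff[of n w] energy_Suc_diff[of "Suc n" w] by (simp add: algebra_simps)
  moreover have "\<bar>defect n * (drift n w + drift (Suc n) w)\<bar> \<le> c * ((2 * c\<^sup>2 + 2 * R / g n) * E1)"
    unfolding abs_mult E1_def using defect_le[of n] defect_nonneg[of n] drift_pair_sum_bound[OF w R]
    by (intro mult_mono) (auto simp: c_def power_divide)
  moreover have "c * (2 * c\<^sup>2 * E1) \<le> 2 * c\<^sup>2 * E1"
    using mult_right_mono[OF c(2), of "2 * c\<^sup>2 * E1"] E1 by simp
  moreover have "\<bar>(defect (Suc n) - defect n) * drift (Suc n) w\<bar> \<le> c\<^sup>2 * (5 * E1)"
    unfolding abs_mult E1_def using defect_diff_bound[of n] drift_bound[OF w1]
    by (intro mult_mono) (auto simp: defect_def abs_minus_commute c_def power_divide)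
  moreover have "(7 / (real n + 1)\<^sup>2 + 2 * R / ((real n + 1) * g n)) * E1
      = 7 * c\<^sup>2 * E1 + c * (2 * R / g n * E1)"
    by (simp add: c_def power_divide field_simps)
  ultimately show ?thesis
    unfolding E1_def[symmetric] by (simp add: algebra_simps)
qed

lemma sum_consecutive_squares:
  "(\<Sum>k\<le>n. (P k w)\<^sup>2 + (P (Suc k) w)\<^sup>2) = 2 * (\<Sum>k\<le>n. (P k w)\<^sup>2) + (P (Suc n) w)\<^sup>2 - 1"
  by (induction n) (simp_all add: opoly_0)

end

section \<open>Uniform asymptotics of the sums of squares\<close>

locale divergent_jacobi_coeffs = jacobi_coeffs +
  assumes unbounded: "filterlim g at_top sequentially"
    and summable_inverse: "summable (\<lambda>n. 1 / ((real n + 1) * g n))"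
begin

lemma eventually_coeff_ge: "\<forall>\<^sub>F n in sequentially. R \<le> g n"
  using unbounded by (simp add: filterlim_at_top)

lemma summable_two_step_error: "summable (\<lambda>n. 7 / (real n + 1)\<^sup>2 + 2 * R / ((real n + 1) * g n))"
proof -
  have "summable (\<lambda>n. inverse (real n ^ 2))"
    by (rule inverse_power_summable) simp
  then have "summable (\<lambda>n. 7 * inverse (real (Suc n) ^ 2))"
    by (intro summable_mult) (subst summable_Suc_iff)
  then show ?thesis
    using summable_add[OF _ summable_mult[OF summable_inverse, of "2 * R"]]
    by (simp add: divide_inverse add.commute)
qed

lemma energy_pair_uniform_limit:
  assumes "compact K"
  obtains L M where "\<And>w. w \<in> K \<Longrightarrow> 0 < L w \<and> L w \<le> M"
    and "uniform_limit K (\<lambda>n w. energy n w + energy (Suc n) w) L sequentially"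
proof -
  obtain R where R: "0 < R" "\<And>w. w \<in> K \<Longrightarrow> \<bar>w\<bar> \<le> R"
    using compact_imp_bounded[OF assms] unfolding bounded_pos by auto
  define eps where "eps n = 7 / (real n + 1)\<^sup>2 + 2 * R / ((real n + 1) * g n)" for n
  have eps_nonneg: "0 \<le> eps n" for n
    unfolding eps_def using R(1) pos[of n] by simp
  have eps_summable: "summable eps"
    unfolding eps_def by (rule summable_two_step_error)
  have "\<forall>\<^sub>F n in sequentially. eps n < 1/2"
    using summable_LIMSEQ_zero[OF eps_summable] by (rule order_tendstoD) simp
  then have "\<forall>\<^sub>F n in sequentially. eps n \<le> 1/2 \<and> R \<le> g n"
    using eventually_coeff_ge by eventually_elim auto
  then obtain N where N: "\<And>n. N \<le> n \<Longrightarrow> eps n \<le> 1/2 \<and> R \<le> g n"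
    unfolding eventually_sequentially by blast
  define x where "x = (\<lambda>n w. energy n w + energy (Suc n) w)"
  have energy_pos_on: "0 < energy n w" if "w \<in> K" "N \<le> n" for n w
    using energy_pos R(2)[OF that(1)] N[OF that(2)] by fastforce
  have step: "\<bar>x (Suc n) w - x n w\<bar> \<le> eps n * x n w" if w: "w \<in> K" and n: "N \<le> n" for n w
  proof -
    have "\<bar>x (Suc n) w - x n w\<bar> = \<bar>energy (Suc (Suc n)) w - energy n w\<bar>" by (simp add: x_def)
    also have "\<dots> \<le> eps n * energy (Suc n) w"
      unfolding eps_def using R(2)[OF w] N[OF n] by (intro energy_two_step) auto
    also have "\<dots> \<le> eps n * x n w"
      using energy_pos_on[OF w n] eps_nonneg[of n] by (intro mult_left_mono) (auto simp: x_def)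
    finally show ?thesis .
  qed
  have x_pos: "0 < x N w" if "w \<in> K" for w
    using energy_pos_on[OF that] by (simp add: x_def add_pos_pos)
  have "continuous_on K (\<lambda>w. x N w)"
    unfolding x_def energy_def by (intro continuous_intros continuous_on_opoly)
  then obtain B where B: "\<And>w. w \<in> K \<Longrightarrow> x N w \<le> B"
    using compact_continuous_abs_bound[OF assms] abs_le_D1 by metis
  obtain L where "\<And>w. w \<in> K \<Longrightarrow> 0 < L w \<and> L w \<le> B * exp (suminf eps)"
    and "uniform_limit K x L sequentially"
    by (rule uniform_limit_relative_increments[where S = K and x = x and N = N])
      (use eps_nonneg eps_summable N step x_pos B in auto)
  then show ?thesis
    unfolding x_def by (rule that)
qed

lemma energy_Suc_diff_uniform_limit:
  assumes "compact K"
    and bounded: "\<forall>\<^sub>F n in sequentially. \<forall>w\<in>K. energy n w + energy (Suc n) w \<le> M"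
  shows "uniform_limit K (\<lambda>n w. energy (Suc n) w - energy n w) (\<lambda>_. 0) sequentially"
proof (rule uniform_limit_by_comparison)
  obtain R where R: "\<And>w. w \<in> K \<Longrightarrow> \<bar>w\<bar> \<le> R"
    using compact_imp_bounded[OF assms(1)] unfolding bounded_real by auto
  show "\<forall>\<^sub>F n in sequentially. \<forall>w\<in>K. \<bar>energy (Suc n) w - energy n w - 0\<bar> \<le> 5 * M / (real n + 1)"
    using bounded eventually_coeff_ge[of R]
  proof (eventually_elim, intro ballI)
    fix n w assume elim: "\<forall>w\<in>K. energy n w + energy (Suc n) w \<le> M" "R \<le> g n" and w: "w \<in> K"
    have wn: "\<bar>w\<bar> \<le> g n" and wn1: "\<bar>w\<bar> \<le> g (Suc n)"
      using R[OF w] elim(2) mono[of n] by linarith+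
    have "\<bar>energy (Suc n) w - energy n w\<bar> = defect n * \<bar>drift n w\<bar>"
      using energy_Suc_diff[of n w] defect_nonneg[of n] by (simp add: abs_mult)
    also have "\<dots> \<le> 1 / (real n + 1) * (5 * M)"
    proof (intro mult_mono)
      show "\<bar>drift n w\<bar> \<le> 5 * M"
        using drift_bound[OF wn] energy_pos[OF wn1] elim(1) w by fastforce
    qed (use defect_le defect_nonneg in auto)
    finally show "\<bar>energy (Suc n) w - energy n w - 0\<bar> \<le> 5 * M / (real n + 1)" by simp
  qed
  have "(\<lambda>n. 5 * M / (real n + 1)) \<longlonglongrightarrow> 0"
    using LIMSEQ_Suc[OF lim_const_over_n[of "5 * M"]] by (simp add: add.commute)
  then show "uniform_limit K (\<lambda>n w. 5 * M / (real n + 1)) (\<lambda>_. 0) sequentially"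
    by (rule uniform_limit_of_tendsto)
qed

lemma energy_uniform_limit:
  assumes "compact K"
  obtains F B where "\<And>w. w \<in> K \<Longrightarrow> 0 < F w \<and> F w \<le> B"
    and "uniform_limit K energy F sequentially"
proof -
  obtain L M where L: "\<And>w. w \<in> K \<Longrightarrow> 0 < L w \<and> L w \<le> M"
    and pair: "uniform_limit K (\<lambda>n w. energy n w + energy (Suc n) w) L sequentially"
    using energy_pair_uniform_limit[OF assms] by blast
  have "\<forall>\<^sub>F n in sequentially. \<forall>w\<in>K. energy n w + energy (Suc n) w \<le> M + 1"
    using L by (intro uniform_limit_eventually_le[OF pair]) blast
  then have diff: "uniform_limit K (\<lambda>n w. energy (Suc n) w - energy n w) (\<lambda>_. 0) sequentially"
    by (rule energy_Suc_diff_uniform_limit[OF assms])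
  have "uniform_limit K (\<lambda>n w. (energy n w + energy (Suc n) w - (energy (Suc n) w - energy n w)) / 2)
      (\<lambda>w. (L w - 0) / 2) sequentially"
    by (intro uniform_limit_intros pair diff)
  then have "uniform_limit K energy (\<lambda>w. L w / 2) sequentially"
    by simp
  with L show ?thesis using that[of "\<lambda>w. L w / 2" M] by force
qed

lemma scaled_squares_uniform_limit:
  assumes "compact K"
  obtains F B where "\<And>w. w \<in> K \<Longrightarrow> 0 < F w \<and> F w \<le> B"
    and "uniform_limit K (\<lambda>n w. g n * ((P n w)\<^sup>2 + (P (Suc n) w)\<^sup>2)) F sequentially"
proof -
  obtain F B where F: "\<And>w. w \<in> K \<Longrightarrow> 0 < F w \<and> F w \<le> B"
    and E: "uniform_limit K energy F sequentially"
    using energy_uniform_limit[OF assms] by blast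
  obtain R where R: "0 < R" "\<And>w. w \<in> K \<Longrightarrow> \<bar>w\<bar> \<le> R"
    using compact_imp_bounded[OF assms] unfolding bounded_pos by auto
  have E_le: "\<forall>\<^sub>F n in sequentially. \<forall>w\<in>K. energy n w \<le> B + 1"
    using F by (intro uniform_limit_eventually_le[OF E]) blast
  have "\<forall>\<^sub>F n in sequentially. \<forall>w\<in>K.
      \<bar>g n * ((P n w)\<^sup>2 + (P (Suc n) w)\<^sup>2) - energy n w - 0\<bar> \<le> R * (B + 1) / g n"
    using E_le eventually_coeff_ge[of R]
  proof (eventually_elim, intro ballI)
    fix n w assume elim: "\<forall>w\<in>K. energy n w \<le> B + 1" "R \<le> g n" and w: "w \<in> K"
    have wn: "\<bar>w\<bar> \<le> g n" using R(2)[OF w] elim(2) by linarith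
    have "\<bar>w\<bar> * energy n w / g n \<le> R * (B + 1) / g n"
      using R(2)[OF w] elim(1) w energy_pos[OF wn] pos[of n] R(1)
      by (intro divide_right_mono mult_mono) auto
    with energy_approx_relative[OF wn]
    show "\<bar>g n * ((P n w)\<^sup>2 + (P (Suc n) w)\<^sup>2) - energy n w - 0\<bar> \<le> R * (B + 1) / g n"
      by simp
  qed
  moreover have "(\<lambda>n. R * (B + 1) / g n) \<longlonglongrightarrow> 0"
    by (intro tendsto_divide_0[OF tendsto_const] filterlim_at_top_imp_at_infinity unbounded)
  ultimately have "uniform_limit K (\<lambda>n w. g n * ((P n w)\<^sup>2 + (P (Suc n) w)\<^sup>2) - energy n w)
      (\<lambda>_. 0) sequentially"
    by (rule uniform_limit_by_comparison[OF _ uniform_limit_of_tendsto])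
  from uniform_limit_add[OF this E]
  have "uniform_limit K (\<lambda>n w. g n * ((P n w)\<^sup>2 + (P (Suc n) w)\<^sup>2)) F sequentially"
    by simp
  from that[OF F this] show ?thesis .
qed

lemma squares_weighted_mean_uniform_limit:
  assumes K: "compact K" and H: "filterlim (\<lambda>n. \<Sum>k\<le>n. 1 / g k) at_top sequentially"
  obtains F B where "\<And>w. w \<in> K \<Longrightarrow> 0 < F w \<and> F w \<le> B"
    and "uniform_limit K (\<lambda>n w. (\<Sum>k\<le>n. (P k w)\<^sup>2 + (P (Suc k) w)\<^sup>2) / (\<Sum>k\<le>n. 1 / g k))
      F sequentially"
proof -
  define Q where "Q n w = (P n w)\<^sup>2 + (P (Suc n) w)\<^sup>2" for n w
  obtain F B where F: "\<And>w. w \<in> K \<Longrightarrow> 0 < F w \<and> F w \<le> B"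
    and u: "uniform_limit K (\<lambda>n w. g n * Q n w) F sequentially"
    using scaled_squares_uniform_limit[OF K] unfolding Q_def by blast
  have early_bounded: "\<exists>C. \<forall>w\<in>K. \<bar>g k * Q k w - F w\<bar> \<le> C" for k
  proof -
    have "continuous_on K (\<lambda>w. g k * Q k w)"
      unfolding Q_def by (intro continuous_intros continuous_on_opoly)
    then obtain C where "\<And>w. w \<in> K \<Longrightarrow> \<bar>g k * Q k w\<bar> \<le> C"
      using compact_continuous_abs_bound[OF K] by blast
    with F show ?thesis by (intro exI[of _ "C + B"]) force
  qed
  have "uniform_limit K (\<lambda>n w. (\<Sum>k\<le>n. 1 / g k * (g k * Q k w)) / (\<Sum>k\<le>n. 1 / g k)) F sequentially"
    using pos by (intro uniform_limit_weighted_mean u early_bounded H) simp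
  moreover have "1 / g k * (g k * Q k w) = Q k w" for k w
    using pos[of k] by simp
  ultimately show ?thesis
    using that[OF F] unfolding Q_def by simp
qed

lemma boundary_term_uniform_limit:
  assumes K: "compact K" and D: "filterlim D at_top sequentially"
  shows "uniform_limit K (\<lambda>n w. (1 - (P (Suc n) w)\<^sup>2) / D n) (\<lambda>_. 0) sequentially"
proof -
  define Q where "Q n w = (P n w)\<^sup>2 + (P (Suc n) w)\<^sup>2" for n w
  obtain F B where F: "\<And>w. w \<in> K \<Longrightarrow> 0 < F w \<and> F w \<le> B"
    and u: "uniform_limit K (\<lambda>n w. g n * Q n w) F sequentially"
    using scaled_squares_uniform_limit[OF K] unfolding Q_def by blast
  have u_le: "\<forall>\<^sub>F n in sequentially. \<forall>w\<in>K. g n * Q n w \<le> B + 1"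
    using F by (intro uniform_limit_eventually_le[OF u]) blast
  have D_pos: "\<forall>\<^sub>F n in sequentially. 0 < D n"
    using D by (simp add: filterlim_at_top_dense)
  have "\<forall>\<^sub>F n in sequentially. \<forall>w\<in>K. \<bar>(1 - (P (Suc n) w)\<^sup>2) / D n - 0\<bar> \<le> (B + 2) / D n"
    using u_le eventually_coeff_ge[of 1] D_pos
  proof (eventually_elim, intro ballI)
    fix n w assume elim: "\<forall>w\<in>K. g n * Q n w \<le> B + 1" "1 \<le> g n" "0 < D n" and w: "w \<in> K"
    have "(P (Suc n) w)\<^sup>2 \<le> Q n w" by (simp add: Q_def)
    also have "\<dots> \<le> g n * Q n w"
      using mult_right_mono[OF elim(2), of "Q n w"] by (simp add: Q_def)
    also have "\<dots> \<le> B + 1" using elim(1) w by blast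
    finally have "(P (Suc n) w)\<^sup>2 \<le> B + 1" .
    moreover have "0 \<le> (P (Suc n) w)\<^sup>2" by simp
    ultimately have "\<bar>1 - (P (Suc n) w)\<^sup>2\<bar> \<le> B + 2" by arith
    then show "\<bar>(1 - (P (Suc n) w)\<^sup>2) / D n - 0\<bar> \<le> (B + 2) / D n"
      using elim(3) by (simp add: abs_divide divide_right_mono)
  qed
  moreover have "(\<lambda>n. (B + 2) / D n) \<longlonglongrightarrow> 0"
    by (intro tendsto_divide_0[OF tendsto_const] filterlim_at_top_imp_at_infinity D)
  ultimately show ?thesis
    by (rule uniform_limit_by_comparison[OF _ uniform_limit_of_tendsto])
qed

lemma sum_squares_uniform_limit:
  fixes D :: "nat \<Rightarrow> real"
  assumes K: "compact K" and \<kappa>: "0 < \<kappa>" and D: "filterlim D at_top sequentially"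
    and ratio: "(\<lambda>n. (\<Sum>k\<le>n. 1 / g k) / D n) \<longlonglongrightarrow> \<kappa>"
  obtains F where "\<And>w. w \<in> K \<Longrightarrow> 0 < F w"
    and "uniform_limit K (\<lambda>n w. (\<Sum>k\<le>n. (P k w)\<^sup>2) / D n) F sequentially"
proof -
  define Q where "Q n w = (P n w)\<^sup>2 + (P (Suc n) w)\<^sup>2" for n w
  define H where "H n = (\<Sum>k\<le>n. 1 / g k)" for n
  have "filterlim H at_top sequentially"
    unfolding H_def by (rule filterlim_at_top_of_ratio[OF ratio \<kappa> D])
  then obtain F B where F: "\<And>w. w \<in> K \<Longrightarrow> 0 < F w \<and> F w \<le> B"
    and mean: "uniform_limit K (\<lambda>n w. (\<Sum>k\<le>n. Q k w) / H n) F sequentially"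
    using squares_weighted_mean_uniform_limit[OF K] unfolding Q_def H_def by blast
  have "bounded (F ` K)"
    unfolding bounded_real using F by (intro exI[of _ B]) force
  then have product:
    "uniform_limit K (\<lambda>n w. (\<Sum>k\<le>n. Q k w) / H n * (H n / D n)) (\<lambda>w. F w * \<kappa>) sequentially"
    using ratio unfolding H_def[symmetric]
    by (intro uniform_lim_mult mean uniform_limit_of_tendsto) (auto simp: bounded_real)
  have combined: "uniform_limit K
      (\<lambda>n w. ((\<Sum>k\<le>n. Q k w) / H n * (H n / D n) + (1 - (P (Suc n) w)\<^sup>2) / D n) / 2)
      (\<lambda>w. (F w * \<kappa> + 0) / 2) sequentially"
    by (intro uniform_limit_intros product boundary_term_uniform_limit K D)
  have "\<forall>\<^sub>F n in sequentially. 0 < D n"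
    using D by (simp add: filterlim_at_top_dense)
  then have "\<forall>\<^sub>F n in sequentially. \<forall>w\<in>K.
      ((\<Sum>k\<le>n. Q k w) / H n * (H n / D n) + (1 - (P (Suc n) w)\<^sup>2) / D n) / 2
        = (\<Sum>k\<le>n. (P k w)\<^sup>2) / D n"
  proof (rule eventually_mono, intro ballI)
    fix n w assume "0 < D n"
    moreover have "0 < H n" unfolding H_def using pos by (intro sum_pos) auto
    ultimately show "((\<Sum>k\<le>n. Q k w) / H n * (H n / D n) + (1 - (P (Suc n) w)\<^sup>2) / D n) / 2
        = (\<Sum>k\<le>n. (P k w)\<^sup>2) / D n"
      unfolding Q_def sum_consecutive_squares by (simp add: field_simps)
  qed
  then have "uniform_limit K
      (\<lambda>n w. ((\<Sum>k\<le>n. Q k w) / H n * (H n / D n) + (1 - (P (Suc n) w)\<^sup>2) / D n) / 2)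
      (\<lambda>w. (F w * \<kappa> + 0) / 2) sequentially
    \<longleftrightarrow> uniform_limit K (\<lambda>n w. (\<Sum>k\<le>n. (P k w)\<^sup>2) / D n) (\<lambda>w. F w * \<kappa> / 2) sequentially"
    by (rule uniform_limit_cong) simp
  from iffD1[OF this combined] show ?thesis
    by (rule that[rotated]) (use F \<kappa> in simp)
qed

end

section \<open>Power-law recursion coefficients\<close>

lemma divergent_jacobi_coeffs_powr:
  fixes c p :: real
  assumes c: "0 < c" and p: "0 < p" "p \<le> 1"
  shows "divergent_jacobi_coeffs (\<lambda>n. c * (real n + 1) powr p)"
proof unfold_locales
  let ?g = "\<lambda>n::nat. c * (real n + 1) powr p"
  have ratio: "?g m / ?g n = ((real m + 1) / (real n + 1)) powr p" for m n
    using c by (simp add: powr_divide)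
  fix n :: nat
  show "0 < ?g n" using c by simp
  show "?g n \<le> ?g (Suc n)" using c p by (auto intro!: powr_mono2)
  show "1 - ?g n / ?g (Suc n) \<le> 1 / (real n + 2)"
    using powr_ratio_defect_le[OF p(2), of n] ratio[of n "Suc n"] by (simp add: add.commute)
  show "\<bar>?g (Suc n) / ?g (Suc (Suc n)) - ?g n / ?g (Suc n)\<bar> \<le> 1 / (real n + 1)\<^sup>2"
    using powr_ratio_defect_diff_le[of p n] p ratio[of "Suc n" "Suc (Suc n)"] ratio[of n "Suc n"]
    by (simp add: add.commute add.left_commute)
  show "\<bar>?g (Suc (Suc n)) / ?g (Suc n) - ?g (Suc n) / ?g n\<bar> \<le> 1 / (real n + 1)\<^sup>2"
    using powr_ratio_diff_le[of p n] p ratio[of "Suc (Suc n)" "Suc n"] ratio[of "Suc n" n]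
    by (simp add: add.commute add.left_commute)
next
  show "filterlim (\<lambda>n. c * (real n + 1) powr p) at_top sequentially"
    using c p by real_asymp
next
  have "summable (\<lambda>n. real n powr (- (1 + p)))"
    using p by (subst summable_real_powr_iff) auto
  then have sm: "summable (\<lambda>n. 1 / c * real (Suc n) powr (- (1 + p)))"
    by (subst summable_Suc_iff) (rule summable_mult)
  have eq: "1 / c * real (Suc n) powr (- (1 + p)) = 1 / ((real n + 1) * (c * (real n + 1) powr p))" for n
  proof -
    have "real (Suc n) powr (- (1 + p)) = inverse (real (Suc n) powr (1 + p))"
      by (rule powr_minus)
    also have "real (Suc n) powr (1 + p) = real (Suc n) * real (Suc n) powr p"
      by (simp add: powr_add)
    finally have "real (Suc n) powr (- (1 + p)) = inverse (real (Suc n) * real (Suc n) powr p)" .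
    then show ?thesis using c by (simp add: field_simps add.commute)
  qed
  from sm show "summable (\<lambda>n. 1 / ((real n + 1) * (c * (real n + 1) powr p)))"
    unfolding eq .
qed

lemma sum_inverse_powr_coeffs_asymptotic:
  fixes c p :: real
  assumes "0 < c" "0 < p" "p < 1"
  shows "(\<lambda>n. (\<Sum>k\<le>n. 1 / (c * (real k + 1) powr p)) / (real n + 1) powr (1 - p))
    \<longlonglongrightarrow> 1 / (c * (1 - p))"
proof -
  have "1 / (c * (real k + 1) powr p) = (real k + 1) powr (- p) / c" for k
    by (simp add: powr_minus divide_inverse)
  then show ?thesis
    using tendsto_divide[OF sum_powr_asymptotic[OF assms(2,3)] tendsto_const, of c] assms(1)
    by (simp add: sum_divide_distrib[symmetric] ac_simps)
qed

theorem corollary4: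
  fixes c p :: real
  assumes "c > 0" and "0 < p" and "p < 1"
  defines "g \<equiv> (\<lambda>n::nat. c * (real n + 1) powr p)"
  shows "\<exists>L :: real \<Rightarrow> real.
           (\<forall>w. 0 < L w \<and>
              (\<lambda>n. (\<Sum>k\<le>n. (opoly g k w)\<^sup>2) / (real n + 1) powr (1 - p)) \<longlonglongrightarrow> L w) \<and>
           (\<forall>K. compact K \<longrightarrow>
              uniform_limit K (\<lambda>n w. (\<Sum>k\<le>n. (opoly g k w)\<^sup>2) / (real n + 1) powr (1 - p))
                L sequentially)"
proof -
  interpret divergent_jacobi_coeffs g
    unfolding g_def using assms by (intro divergent_jacobi_coeffs_powr) auto
  have ratio: "(\<lambda>n. (\<Sum>k\<le>n. 1 / g k) / (real n + 1) powr (1 - p)) \<longlonglongrightarrow> 1 / (c * (1 - p))"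
    unfolding g_def by (rule sum_inverse_powr_coeffs_asymptotic[OF assms(1-3)])
  have D: "filterlim (\<lambda>n. (real n + 1) powr (1 - p)) at_top sequentially"
    using assms by real_asymp
  show ?thesis
  proof (rule ex_positive_limit_uniform_on_compacts)
    fix K :: "real set" assume K: "compact K"
    have "0 < 1 / (c * (1 - p))" using assms by simp
    then obtain F where "\<And>w. w \<in> K \<Longrightarrow> 0 < F w"
      and "uniform_limit K (\<lambda>n w. (\<Sum>k\<le>n. (opoly g k w)\<^sup>2) / (real n + 1) powr (1 - p)) F sequentially"
      using sum_squares_uniform_limit[OF K _ D ratio] by blast
    then show "\<exists>F. (\<forall>w\<in>K. 0 < F w) \<and>
        uniform_limit K (\<lambda>n w. (\<Sum>k\<le>n. (opoly g k w)\<^sup>2) / (real n + 1) powr (1 - p)) F sequentially"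
      by blast
  qed
qed

end
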